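(* Let $M\subseteq\mathbb{N}$ and let $L$ be the class of all partial functions from $\mathbb{N}^k$ to $\mathbb{N}$ (all arities $k\ge1$) whose graphs are enumeration reducible to $M$. Assume $L$ satisfies: (1) $L$ contains all partial recursive functions and is closed under substitution, primitive recursion and the $\mu$-operator; (2) for every unary function $f\in L$ there exist a set $R\subseteq\mathbb{N}$ and unary functions $\alpha,\omega\in L$ whose domains contain $R$, such that the indicator function of $R$ belongs to $L$, and for all $x,y$, $f(x)$ is defined and equals $y$ iff there is $m\in R$ with $\alpha(m)=x$ and $\omega(m)=y$; (3) there exists a binary function $F\in L$ such that for every unary $f\in L$ there is $n$ with $F(n,\cdot)=f$. Then there exists a set $S\subseteq\mathbb{N}$ such that $M$ is enumeration equivalent to $S\oplus\overline{S}$, i.e., $M$ is enumeration reducible to $S\oplus\overline S$ and $S\oplus\overline S$ is enumeration reducible to $M$.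
   Context: Fix a standard recursive bijective encoding of tuples of natural numbers by natural numbers. The graph of a partial function $g:\mathbb{N}^k\to\mathbb{N}$ is the set of codes of tuples $(x_1,\dots,x_k,y)$ with $g(x_1,\dots,x_k)=y$. For $X,Y\subseteq\mathbb{N}$, $X$ is enumeration reducible to $Y$ if there is a recursively enumerable set $W$ of pairs $(x,u)$ such that $x\in X$ iff there is $u$ with $(x,u)\in W$ and $D_u\subseteq Y$, where $D_u$ is the finite set with canonical index $u$. $\overline S=\mathbb{N}\setminus S$, and $A\oplus B=\{2n\mid n\in A\}\cup\{2n+1\mid n\in B\}$. *)

theory Defs
  imports Main "HOL-Library.Nat_Bijection"
begin

datatype recf = Zero | Succ | Proj nat | Comp recf "recf list" | Prim recf recf | Mn recf

inductive eval :: "recf \<Rightarrow> nat list \<Rightarrow> nat \<Rightarrow> bool" where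
  zero: "eval Zero xs 0"
| succ: "eval Succ (x # xs) (Suc x)"
| proj: "i < length xs \<Longrightarrow> eval (Proj i) xs (xs ! i)"
| comp: "list_all2 (\<lambda>g y. eval g xs y) gs ys \<Longrightarrow> eval f ys z \<Longrightarrow> eval (Comp f gs) xs z"
| prim0: "eval f xs y \<Longrightarrow> eval (Prim f g) (0 # xs) y"
| primS: "eval (Prim f g) (n # xs) y \<Longrightarrow> eval g (n # y # xs) z \<Longrightarrow> eval (Prim f g) (Suc n # xs) z"
| mn: "eval f (y # xs) 0 \<Longrightarrow> (\<forall>i<y. \<exists>z. z \<noteq> 0 \<and> eval f (i # xs) z) \<Longrightarrow> eval (Mn f) xs y"

text \<open>Partial functions are modelled as nat list => nat option; a k-ary partial function
  only matters on lists of length k.\<close>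

type_synonym pfun = "nat list \<Rightarrow> nat option"

definition pr_fun :: "recf \<Rightarrow> pfun" where
  "pr_fun r xs = (if \<exists>y. eval r xs y then Some (THE y. eval r xs y) else None)"

definition re_set :: "nat set \<Rightarrow> bool" where
  "re_set W \<longleftrightarrow> (\<exists>r. W = {x. \<exists>y. eval r [x] y})"

text \<open>Canonical finite set with index u: D_u = set_decode u.  Pairs coded by prod_encode.\<close>

definition e_reducible :: "nat set \<Rightarrow> nat set \<Rightarrow> bool" where
  "e_reducible X Y \<longleftrightarrow> (\<exists>W. re_set W \<and>
     (\<forall>x. x \<in> X \<longleftrightarrow> (\<exists>u. prod_encode (x, u) \<in> W \<and> set_decode u \<subseteq> Y)))"

definition join :: "nat set \<Rightarrow> nat set \<Rightarrow> nat set" where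
  "join A B = {2 * n | n. n \<in> A} \<union> {2 * n + 1 | n. n \<in> B}"

definition graph :: "nat \<Rightarrow> pfun \<Rightarrow> nat set" where
  "graph k f = {list_encode (xs @ [y]) | xs y. length xs = k \<and> f xs = Some y}"

definition inL :: "nat set \<Rightarrow> nat \<Rightarrow> pfun \<Rightarrow> bool" where
  "inL M k f \<longleftrightarrow> k \<ge> 1 \<and> e_reducible (graph k f) M"

definition subst :: "pfun \<Rightarrow> pfun list \<Rightarrow> pfun" where
  "subst f gs xs = (if \<forall>g\<in>set gs. g xs \<noteq> None then f (map (\<lambda>g. the (g xs)) gs) else None)"

fun prec :: "pfun \<Rightarrow> pfun \<Rightarrow> nat list \<Rightarrow> nat option" where
  "prec f g [] = None"
| "prec f g (0 # xs) = f xs"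
| "prec f g (Suc n # xs) = (case prec f g (n # xs) of None \<Rightarrow> None | Some y \<Rightarrow> g (n # y # xs))"

definition mu :: "pfun \<Rightarrow> pfun" where
  "mu f xs = (if \<exists>y. f (y # xs) = Some 0 \<and> (\<forall>i<y. \<exists>z. f (i # xs) = Some (Suc z))
              then Some (THE y. f (y # xs) = Some 0 \<and> (\<forall>i<y. \<exists>z. f (i # xs) = Some (Suc z)))
              else None)"

definition indicator_fn :: "nat set \<Rightarrow> pfun" where
  "indicator_fn R xs = Some (if hd xs \<in> R then 1 else 0)"

end

theory Submission
  imports Defs
begin

text \<open>The semicharacteristic function of \<open>M\<close> (\<open>0\<close> on \<open>M\<close>, undefined elsewhere) has a graph
  enumeration reducible to \<open>M\<close>, so hypothesis (2) represents it by a set \<open>R\<close> with indicator in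
  \<open>L\<close> and functions \<open>\<alpha>\<close>, \<open>\<omega>\<close> defined on \<open>R\<close>. With
  \<open>T = {\<langle>m, a\<rangle> | m \<in> R, \<alpha> m = a, \<omega> m = 0}\<close> we get \<open>a \<in> M \<longleftrightarrow> \<exists>m. \<langle>m, a\<rangle> \<in> T\<close>, whence
  \<open>M \<le>\<^sub>e T \<oplus> \<not>T\<close>. Conversely the indicator of \<open>T\<close> lies in \<open>L\<close>: a definition by cases
  on membership in \<open>R\<close>, realised by primitive recursion so that \<open>\<alpha>\<close> and \<open>\<omega>\<close> are only evaluated
  on \<open>R\<close>. Membership in \<open>T \<oplus> \<not>T\<close> is a recursive condition on the graph of this indicator, so
  \<open>T \<oplus> \<not>T \<le>\<^sub>e M\<close>.\<close>

inductive_cases eval_ZeroE: "eval Zero xs y"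
inductive_cases eval_SuccE: "eval Succ xs y"
inductive_cases eval_ProjE: "eval (Proj i) xs y"
inductive_cases eval_CompE: "eval (Comp f gs) xs y"
inductive_cases eval_PrimE: "eval (Prim f g) xs y"
inductive_cases eval_MnE: "eval (Mn f) xs y"

lemma eval_deterministic: "eval r xs y \<Longrightarrow> eval r xs y' \<Longrightarrow> y = y'"
proof (induction r xs y arbitrary: y' rule: eval.induct)
  case (comp xs gs ys f z)
  from comp.prems obtain ys' where gs: "list_all2 (\<lambda>g y. eval g xs y) gs ys'" and f: "eval f ys' y'"
    by (blast elim: eval_CompE)
  have "ys = ys'"
    using comp(1) gs by (auto simp: list_all2_conv_all_nth intro: nth_equalityI)
  then show ?case using comp.IH f by simp
next
  case (primS f g n xs y z)
  then show ?case by (metis eval_PrimE nat.distinct(1) nat.inject list.inject)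
next
  case (mn f y xs)
  from mn.prems have "eval f (y' # xs) 0" and "\<forall>i<y'. \<exists>z. z \<noteq> 0 \<and> eval f (i # xs) z"
    by (blast elim: eval_MnE)+
  with mn.hyps mn.IH show ?case by (metis linorder_neqE_nat)
qed (blast elim: eval_ZeroE eval_SuccE eval_ProjE eval_PrimE)+

definition computable :: "nat \<Rightarrow> (nat list \<Rightarrow> nat) \<Rightarrow> bool" where
  "computable k h \<longleftrightarrow> (\<exists>r. \<forall>xs. length xs = k \<longrightarrow> eval r xs (h xs))"

fun const_recf :: "nat \<Rightarrow> recf" where
  "const_recf 0 = Zero"
| "const_recf (Suc c) = Comp Succ [const_recf c]"

lemma eval_const_recf: "eval (const_recf c) xs c"
  by (induction c) (auto intro!: eval.intros)

lemma computable_const: "computable k (\<lambda>_. c)"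
  unfolding computable_def using eval_const_recf by blast

lemma computable_proj: "i < k \<Longrightarrow> computable k (\<lambda>xs. xs ! i)"
  unfolding computable_def by (auto intro!: exI[of _ "Proj i"] eval.intros)

lemma computable_comp:
  assumes f: "computable (length gs) f" and gs: "\<forall>g\<in>set gs. computable k g"
  shows "computable k (\<lambda>xs. f (map (\<lambda>g. g xs) gs))"
proof -
  have "\<exists>rs. \<forall>xs. length xs = k \<longrightarrow> list_all2 (\<lambda>r y. eval r xs y) rs (map (\<lambda>g. g xs) gs)"
    using gs
  proof (induction gs)
    case (Cons g gs)
    then obtain rs r where "\<forall>xs. length xs = k \<longrightarrow> list_all2 (\<lambda>r y. eval r xs y) rs (map (\<lambda>g. g xs) gs)"
      "\<forall>xs. length xs = k \<longrightarrow> eval r xs (g xs)"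
      unfolding computable_def by auto
    then show ?case by (auto intro!: exI[of _ "r # rs"])
  qed simp
  then obtain rs where rs: "\<forall>xs. length xs = k \<longrightarrow> list_all2 (\<lambda>r y. eval r xs y) rs (map (\<lambda>g. g xs) gs)" ..
  from f obtain rf where "\<forall>ys. length ys = length gs \<longrightarrow> eval rf ys (f ys)"
    unfolding computable_def by auto
  with rs show ?thesis unfolding computable_def
    by (intro exI[of _ "Comp rf rs"]) (auto intro: eval.comp)
qed

lemma computable_comp1: "computable 1 f \<Longrightarrow> computable k g \<Longrightarrow> computable k (\<lambda>xs. f [g xs])"
  using computable_comp[where gs="[g]"] by simp

lemma computable_comp2:
  "computable 2 f \<Longrightarrow> computable k g \<Longrightarrow> computable k g' \<Longrightarrow> computable k (\<lambda>xs. f [g xs, g' xs])"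
  using computable_comp[where gs="[g, g']"] by (simp add: numeral_2_eq_2)

lemma computable_prim_recI:
  assumes "computable k f" "computable (k + 2) g"
    and "\<And>ys. length ys = k \<Longrightarrow> h (0 # ys) = f ys"
    and "\<And>n ys. length ys = k \<Longrightarrow> h (Suc n # ys) = g (n # h (n # ys) # ys)"
  shows "computable (k + 1) h"
proof -
  from assms(1,2) obtain rf rg where rf: "\<forall>ys. length ys = k \<longrightarrow> eval rf ys (f ys)"
    and rg: "\<forall>ys. length ys = k + 2 \<longrightarrow> eval rg ys (g ys)"
    unfolding computable_def by auto
  have "eval (Prim rf rg) (n # ys) (h (n # ys))" if "length ys = k" for n ys
    using that by (induction n) (auto intro!: eval.intros rf[rule_format] rg[rule_format] simp: assms(3,4))
  then show ?thesis unfolding computable_def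
    by (intro exI[of _ "Prim rf rg"]) (auto simp: length_Suc_conv)
qed

lemma computable_unary_op:
  "computable 1 (\<lambda>xs. f (xs ! 0)) \<Longrightarrow> computable k a \<Longrightarrow> computable k (\<lambda>xs. f (a xs))"
  using computable_comp1 by fastforce

lemma computable_binary_op:
  "computable 2 (\<lambda>xs. f (xs ! 0) (xs ! 1)) \<Longrightarrow> computable k a \<Longrightarrow> computable k b
    \<Longrightarrow> computable k (\<lambda>xs. f (a xs) (b xs))"
  using computable_comp2 by fastforce

lemma computable_Suc:
  assumes "computable k a" shows "computable k (\<lambda>xs. Suc (a xs))"
proof -
  have "computable 1 (\<lambda>xs. Suc (xs ! 0))"
    unfolding computable_def by (auto intro!: exI[of _ Succ] eval.intros simp: length_Suc_conv)
  from computable_unary_op[OF this assms] show ?thesis .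
qed

lemma computable_add:
  assumes "computable k a" "computable k b" shows "computable k (\<lambda>xs. a xs + b xs)"
proof -
  have "computable 2 (\<lambda>xs. xs ! 0 + xs ! 1)"
    using computable_prim_recI[where k=1 and f="\<lambda>xs. xs ! 0" and g="\<lambda>xs. Suc (xs ! 1)"
        and h="\<lambda>xs. xs ! 0 + xs ! 1"]
    by (simp add: numeral_2_eq_2 computable_proj computable_Suc)
  from computable_binary_op[OF this assms] show ?thesis .
qed

lemma computable_pred:
  assumes "computable k a" shows "computable k (\<lambda>xs. a xs - 1)"
proof -
  have "computable 1 (\<lambda>xs. xs ! 0 - 1)"
    using computable_prim_recI[where k=0 and f="\<lambda>_. 0" and g="\<lambda>xs. xs ! 0"
        and h="\<lambda>xs. xs ! 0 - 1"]
    by (simp add: computable_proj computable_const)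
  from computable_unary_op[OF this assms] show ?thesis .
qed

lemma computable_diff:
  assumes "computable k a" "computable k b" shows "computable k (\<lambda>xs. a xs - b xs)"
proof -
  have "computable 2 (\<lambda>xs. xs ! 1 - xs ! 0)"
    using computable_prim_recI[where k=1 and f="\<lambda>xs. xs ! 0" and g="\<lambda>xs. xs ! 1 - 1"
        and h="\<lambda>xs. xs ! 1 - xs ! 0"] computable_pred[OF computable_proj[of 1 3]]
    by (simp add: numeral_2_eq_2 numeral_3_eq_3 computable_proj)
  from computable_binary_op[OF this assms(2,1)] show ?thesis .
qed

lemma computable_power2:
  assumes "computable k a" shows "computable k (\<lambda>xs. 2 ^ a xs)"
proof -
  have "computable 1 (\<lambda>xs. 2 ^ (xs ! 0))"
    using computable_prim_recI[where k=0 and f="\<lambda>_. 1" and g="\<lambda>xs. xs ! 1 + xs ! 1"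
        and h="\<lambda>xs. 2 ^ (xs ! 0)"]
    by (simp add: computable_proj computable_const computable_add)
  from computable_unary_op[OF this assms] show ?thesis .
qed

lemma computable_triangle:
  assumes "computable k a" shows "computable k (\<lambda>xs. triangle (a xs))"
proof -
  have "computable 1 (\<lambda>xs. triangle (xs ! 0))"
    using computable_prim_recI[where k=0 and f="\<lambda>_. 0" and g="\<lambda>xs. xs ! 1 + Suc (xs ! 0)"
        and h="\<lambda>xs. triangle (xs ! 0)"]
    by (simp add: computable_proj computable_const computable_add computable_Suc)
  from computable_unary_op[OF this assms] show ?thesis .
qed

lemma computable_mod2:
  assumes "computable k a" shows "computable k (\<lambda>xs. a xs mod 2)"
proof -
  have "computable 1 (\<lambda>xs. xs ! 0 mod 2)"
    using computable_prim_recI[where k=0 and f="\<lambda>_. 0" and g="\<lambda>xs. 1 - xs ! 1"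
        and h="\<lambda>xs. xs ! 0 mod 2"]
    by (simp add: computable_proj computable_const computable_diff mod_Suc)
  from computable_unary_op[OF this assms] show ?thesis .
qed

lemma computable_div2:
  assumes "computable k a" shows "computable k (\<lambda>xs. a xs div 2)"
proof -
  have div2_Suc: "Suc n div 2 = n div 2 + n mod 2" for n :: nat
    by presburger
  have "computable 1 (\<lambda>xs. xs ! 0 div 2)"
    using computable_prim_recI[where k=0 and f="\<lambda>_. 0" and g="\<lambda>xs. xs ! 1 + xs ! 0 mod 2"
        and h="\<lambda>xs. xs ! 0 div 2"]
    by (simp add: computable_proj computable_const computable_add computable_mod2 div2_Suc)
  from computable_unary_op[OF this assms] show ?thesis .
qed

lemma computable_prod_encode:
  "computable k a \<Longrightarrow> computable k b \<Longrightarrow> computable k (\<lambda>xs. prod_encode (a xs, b xs))"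
  unfolding prod_encode_def by (simp add: computable_add computable_triangle)

fun triangle_root :: "nat \<Rightarrow> nat" where
  "triangle_root 0 = 0"
| "triangle_root (Suc p) =
    (if triangle (Suc (triangle_root p)) \<le> Suc p then Suc (triangle_root p) else triangle_root p)"

lemma triangle_root_bounds: "triangle (triangle_root p) \<le> p \<and> p < triangle (Suc (triangle_root p))"
  by (induction p) auto

lemma computable_triangle_root:
  assumes "computable k a" shows "computable k (\<lambda>xs. triangle_root (a xs))"
proof -
  have "computable 1 (\<lambda>xs. triangle_root (xs ! 0))"
    using computable_prim_recI[where k=0 and f="\<lambda>_. 0"
        and g="\<lambda>xs. xs ! 1 + (1 - (triangle (Suc (xs ! 1)) - Suc (xs ! 0)))"
        and h="\<lambda>xs. triangle_root (xs ! 0)"]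
    by (simp add: computable_proj computable_const computable_add computable_diff computable_Suc
        computable_triangle)
  from computable_unary_op[OF this assms] show ?thesis .
qed

lemma prod_decode_triangle_root:
  "prod_decode p = (p - triangle (triangle_root p), triangle_root p - (p - triangle (triangle_root p)))"
proof -
  have "prod_encode (p - triangle (triangle_root p), triangle_root p - (p - triangle (triangle_root p))) = p"
    using triangle_root_bounds[of p] by (simp add: prod_encode_def)
  then show ?thesis by (metis prod_encode_inverse)
qed

lemma computable_fst_prod_decode: "computable k a \<Longrightarrow> computable k (\<lambda>xs. fst (prod_decode (a xs)))"
  unfolding prod_decode_triangle_root by (simp add: computable_diff computable_triangle computable_triangle_root)

lemma computable_snd_prod_decode: "computable k a \<Longrightarrow> computable k (\<lambda>xs. snd (prod_decode (a xs)))"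
  unfolding prod_decode_triangle_root by (simp add: computable_diff computable_triangle computable_triangle_root)

lemma computable_list_encode_pair:
  "computable k a \<Longrightarrow> computable k b \<Longrightarrow> computable k (\<lambda>xs. list_encode [a xs, b xs])"
  by (simp add: computable_Suc computable_prod_encode computable_const)

lemma eval_Comp_iff:
  assumes "list_all2 (\<lambda>g v. eval g xs v) gs vs"
  shows "eval (Comp f gs) xs y \<longleftrightarrow> eval f vs y"
proof
  assume "eval (Comp f gs) xs y"
  then obtain vs' where "list_all2 (\<lambda>g v. eval g xs v) gs vs'" "eval f vs' y"
    by (blast elim: eval_CompE)
  moreover from assms this(1) have "vs' = vs"
    by (simp add: list_all2_conv_all_nth) (metis nth_equalityI eval_deterministic)
  ultimately show "eval f vs y" by simp
qed (use assms in \<open>blast intro: eval.comp\<close>)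

lemma eval_Mn_iff:
  assumes "\<And>x. eval r (x # xs) (g x)"
  shows "eval (Mn r) xs y \<longleftrightarrow> g y = 0 \<and> (\<forall>i<y. g i \<noteq> 0)"
proof
  assume "eval (Mn r) xs y"
  then have "eval r (y # xs) 0" "\<forall>i<y. \<exists>z. z \<noteq> 0 \<and> eval r (i # xs) z"
    by (blast elim: eval_MnE)+
  then show "g y = 0 \<and> (\<forall>i<y. g i \<noteq> 0)"
    using assms eval_deterministic by metis
next
  assume "g y = 0 \<and> (\<forall>i<y. g i \<noteq> 0)"
  then show "eval (Mn r) xs y"
    by (intro eval.mn) (metis assms)+
qed

lemma re_set_range:
  assumes "computable 1 h" shows "re_set (range (\<lambda>x. h [x]))"
proof -
  have "computable 2 (\<lambda>xs. (h [xs ! 0] - xs ! 1) + (xs ! 1 - h [xs ! 0]))"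
    by (intro computable_add computable_diff computable_comp1[OF assms] computable_proj) simp_all
  then obtain r where r: "\<And>x p. eval r [x, p] ((h [x] - p) + (p - h [x]))"
    unfolding computable_def
    by (metis length_Cons list.size(3) nth_Cons_0 nth_Cons_Suc numeral_2_eq_2 One_nat_def)
  have "eval (Mn r) [p] y \<longleftrightarrow> h [y] = p \<and> (\<forall>i<y. h [i] \<noteq> p)" for p y
    using eval_Mn_iff[where xs="[p]", OF r] by auto
  then have "(\<exists>y. eval (Mn r) [p] y) \<longleftrightarrow> p \<in> range (\<lambda>x. h [x])" for p
    using exists_least_iff[of "\<lambda>x. h [x] = p"] by auto
  then show ?thesis unfolding re_set_def by blast
qed

lemma re_set_preimage:
  assumes "re_set W" "computable 1 h" shows "re_set {x. h [x] \<in> W}"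
proof -
  from assms obtain r rh where W: "W = {x. \<exists>y. eval r [x] y}" and rh: "\<And>x. eval rh [x] (h [x])"
    unfolding computable_def re_set_def by (metis length_Cons list.size(3) One_nat_def)
  have "eval (Comp r [rh]) [x] y \<longleftrightarrow> eval r [h [x]] y" for x y
    by (rule eval_Comp_iff) (simp add: rh)
  then show ?thesis unfolding re_set_def W by blast
qed

lemma e_reducible_via_image:
  assumes "computable 1 f" "computable 1 g" and X: "\<And>x. x \<in> X \<longleftrightarrow> (\<exists>t. f [t] = x \<and> g [t] \<in> Y)"
  shows "e_reducible X Y"
proof -
  define W where "W = range (\<lambda>t. prod_encode (f [t], 2 ^ g [t]))"
  have "computable 1 (\<lambda>xs. prod_encode (f [xs ! 0], 2 ^ g [xs ! 0]))"
    by (intro computable_prod_encode computable_power2 computable_comp1[OF assms(1)]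
        computable_comp1[OF assms(2)] computable_proj) simp_all
  then have "re_set W"
    unfolding W_def using re_set_range by fastforce
  moreover have "x \<in> X \<longleftrightarrow> (\<exists>u. prod_encode (x, u) \<in> W \<and> set_decode u \<subseteq> Y)" for x
  proof -
    have singleton: "set_decode (2 ^ n) = {n}" for n
      using set_encode_inverse[of "{n}"] by simp
    have "prod_encode (x, u) \<in> W \<longleftrightarrow> (\<exists>t. x = f [t] \<and> u = 2 ^ g [t])" for u
      unfolding W_def by (auto simp: prod_encode_eq)
    then show ?thesis
      unfolding X using singleton by auto
  qed
  ultimately show ?thesis
    unfolding e_reducible_def by blast
qed

lemma e_reducible_preimage:
  assumes "e_reducible X Y" "computable 1 h" and Z: "\<And>z. z \<in> Z \<longleftrightarrow> h [z] \<in> X"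
  shows "e_reducible Z Y"
proof -
  from assms(1) obtain W where "re_set W"
    and X: "\<And>x. x \<in> X \<longleftrightarrow> (\<exists>u. prod_encode (x, u) \<in> W \<and> set_decode u \<subseteq> Y)"
    unfolding e_reducible_def by blast
  define h' where "h' xs = prod_encode (h [fst (prod_decode (xs ! 0))], snd (prod_decode (xs ! 0)))" for xs
  have "computable 1 h'" unfolding h'_def
    by (intro computable_prod_encode computable_fst_prod_decode computable_snd_prod_decode
        computable_comp1[OF assms(2)] computable_proj) simp_all
  with \<open>re_set W\<close> have "re_set {p. h' [p] \<in> W}" by (rule re_set_preimage)
  then show ?thesis
    unfolding e_reducible_def Z X by (intro exI[of _ "{p. h' [p] \<in> W}"]) (simp add: h'_def)
qed

lemma list_encode_mem_graph: "list_encode (xs @ [y]) \<in> graph k f \<longleftrightarrow> length xs = k \<and> f xs = Some y"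
  unfolding graph_def by (auto simp: list_encode_eq)

lemma graph_cong: "(\<And>xs. length xs = k \<Longrightarrow> f xs = f' xs) \<Longrightarrow> graph k f = graph k f'"
  unfolding graph_def by metis

lemma inL_cong: "inL M k f \<Longrightarrow> (\<And>xs. length xs = k \<Longrightarrow> f xs = f' xs) \<Longrightarrow> inL M k f'"
  unfolding inL_def using graph_cong by metis

lemma inL_unary_cong: "inL M 1 f \<Longrightarrow> (\<And>x. f [x] = g [x]) \<Longrightarrow> inL M 1 g"
  by (erule inL_cong) (auto simp: length_Suc_conv)

lemma inL_semicharacteristic: "inL M 1 (\<lambda>xs. if hd xs \<in> M then Some 0 else None)"
  unfolding inL_def
proof (intro conjI e_reducible_via_image)
  show "computable 1 (\<lambda>xs. list_encode [xs ! 0, 0])"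
    by (intro computable_list_encode_pair computable_proj computable_const) simp
  show "computable 1 (\<lambda>xs. xs ! 0)"
    by (rule computable_proj) simp
  fix z
  show "z \<in> graph 1 (\<lambda>xs. if hd xs \<in> M then Some 0 else None)
    \<longleftrightarrow> (\<exists>t. list_encode [[t] ! 0, 0] = z \<and> [t] ! 0 \<in> M)"
    unfolding graph_def by (force simp: length_Suc_conv simp del: list_encode.simps split: if_splits)
qed simp

lemma join_compl_iff: "z \<in> join T (- T) \<longleftrightarrow> (z div 2 \<in> T \<longleftrightarrow> z mod 2 = 0)"
proof (cases "even z")
  case True
  then obtain n where "z = 2 * n" ..
  then show ?thesis unfolding join_def by auto presburger+
next
  case False
  then obtain n where "z = 2 * n + 1" ..
  then show ?thesis unfolding join_def by auto presburger+
qed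

lemma e_reducible_join_compl:
  assumes "inL M 1 (indicator_fn T)" shows "e_reducible (join T (- T)) M"
proof (rule e_reducible_preimage)
  show "e_reducible (graph 1 (indicator_fn T)) M"
    using assms unfolding inL_def by simp
  show "computable 1 (\<lambda>xs. list_encode [xs ! 0 div 2, 1 - xs ! 0 mod 2])"
    by (intro computable_list_encode_pair computable_div2 computable_mod2 computable_diff
        computable_proj computable_const) simp_all
  fix z
  have "list_encode [z div 2, 1 - z mod 2] \<in> graph 1 (indicator_fn T)
      \<longleftrightarrow> (if z div 2 \<in> T then 1 else 0) = 1 - z mod 2"
    using list_encode_mem_graph[of "[z div 2]"] by (simp add: indicator_fn_def)
  then show "z \<in> join T (- T) \<longleftrightarrow> list_encode [[z] ! 0 div 2, 1 - [z] ! 0 mod 2] \<in> graph 1 (indicator_fn T)"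
    unfolding join_compl_iff by auto
qed

lemma e_reducible_snd_join_compl: "e_reducible (snd ` prod_decode ` T) (join T (- T))"
proof (rule e_reducible_via_image)
  show "computable 1 (\<lambda>xs. snd (prod_decode (xs ! 0)))"
    by (intro computable_snd_prod_decode computable_proj) simp
  show "computable 1 (\<lambda>xs. 2 * xs ! 0)"
    using computable_add[OF computable_proj computable_proj, of 0 1 0] by (simp add: mult_2)
  show "a \<in> snd ` prod_decode ` T \<longleftrightarrow> (\<exists>t. snd (prod_decode ([t] ! 0)) = a \<and> 2 * [t] ! 0 \<in> join T (- T))"
    for a
    by (auto simp: join_compl_iff)
qed

locale recursively_closed =
  fixes M :: "nat set"
  assumes contains_prf: "\<forall>r k. k \<ge> 1 \<longrightarrow> inL M k (pr_fun r)"
    and closed_subst: "\<forall>m k f gs. length gs = m \<longrightarrow> inL M m f \<longrightarrow> (\<forall>g\<in>set gs. inL M k g)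
                          \<longrightarrow> inL M k (subst f gs)"
    and closed_prec: "\<forall>k f g. inL M k f \<longrightarrow> inL M (k + 2) g \<longrightarrow> inL M (k + 1) (prec f g)"
begin

lemma inL_computable:
  assumes "computable k h" "1 \<le> k" shows "inL M k (\<lambda>xs. Some (h xs))"
proof -
  from assms(1) obtain r where r: "\<And>xs. length xs = k \<Longrightarrow> eval r xs (h xs)"
    unfolding computable_def by blast
  have "pr_fun r xs = Some (h xs)" if "length xs = k" for xs
    unfolding pr_fun_def using r[OF that] eval_deterministic by (auto intro!: the_equality)
  then show ?thesis
    using contains_prf assms(2) inL_cong by metis
qed

lemma inL_proj: "i < k \<Longrightarrow> inL M k (\<lambda>xs. Some (xs ! i))"
  using inL_computable[OF computable_proj] by simp

lemma inL_subst: "inL M (length gs) f \<Longrightarrow> \<forall>g\<in>set gs. inL M k g \<Longrightarrow> inL M k (subst f gs)"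
  using closed_subst by blast

lemma inL_if_mem:
  assumes R: "inL M 1 (indicator_fn R)" and f: "inL M k f" and c: "computable k c" and "1 \<le> k"
  shows "inL M k (\<lambda>xs. if c xs \<in> R then f xs else Some 0)"
proof -
  define projs :: "nat \<Rightarrow> pfun list" where "projs d = map (\<lambda>i xs. Some (xs ! (i + d))) [0..<k]" for d
  have projs_inL: "\<forall>g\<in>set (projs d). inL M (k + d) g" for d
    unfolding projs_def using inL_proj by auto
  have projs_defined: "\<forall>g\<in>set (projs d). g xs \<noteq> None" for d xs
    by (simp add: projs_def)
  have map_projs: "map (\<lambda>g. the (g (zs @ ys))) (projs (length zs)) = ys" if "length ys = k" for zs ys
    using that unfolding projs_def by (intro nth_equalityI) (simp_all add: nth_append)
  have length_projs: "length (projs d) = k" for d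
    by (simp add: projs_def)
  define step where "step = subst f (projs 2)"
  \<comment> \<open>\<open>cases_fn (0 # ys) = Some 0\<close> without evaluating \<open>f\<close>, and \<open>cases_fn (1 # ys) = f ys\<close>\<close>
  define cases_fn where "cases_fn = prec (\<lambda>_. Some 0) step"
  have "inL M (k + 2) step"
    unfolding step_def using inL_subst f projs_inL length_projs by metis
  moreover have "inL M k (\<lambda>_. Some 0)"
    using inL_computable[OF computable_const] \<open>1 \<le> k\<close> .
  ultimately have "inL M (k + 1) cases_fn"
    unfolding cases_fn_def using closed_prec by blast
  moreover have "inL M k (subst (indicator_fn R) [\<lambda>xs. Some (c xs)])"
    using inL_subst R inL_computable[OF c] \<open>1 \<le> k\<close> by simp
  ultimately have "inL M k (subst cases_fn ((subst (indicator_fn R) [\<lambda>xs. Some (c xs)]) # projs 0))"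
    using inL_subst[of "_ # projs 0"] projs_inL[of 0] by (simp add: length_projs)
  moreover have "subst cases_fn ((subst (indicator_fn R) [\<lambda>xs. Some (c xs)]) # projs 0) ys
      = (if c ys \<in> R then f ys else Some 0)" if "length ys = k" for ys
    using map_projs[of ys "[]"] map_projs[of ys "[0, 0]"] projs_defined that
    by (simp add: subst_def cases_fn_def step_def indicator_fn_def numeral_2_eq_2)
  ultimately show ?thesis by (rule inL_cong)
qed

lemma inL_indicator_witness_pairs:
  assumes R: "inL M 1 (indicator_fn R)" and "inL M 1 \<alpha>" "inL M 1 \<omega>"
    and defined: "\<forall>m\<in>R. \<alpha> [m] \<noteq> None \<and> \<omega> [m] \<noteq> None"
  shows "inL M 1 (indicator_fn {prod_encode (m, a) | m a. m \<in> R \<and> \<alpha> [m] = Some a \<and> \<omega> [m] = Some 0})"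
    (is "inL M 1 (indicator_fn ?T)")
proof -
  \<comment> \<open>\<open>1 - (|x - a| + w)\<close> tests \<open>x = a \<and> w = 0\<close>\<close>
  define test :: pfun where "test = subst (\<lambda>xs. Some (1 - ((xs ! 0 - xs ! 2) + (xs ! 2 - xs ! 0) + xs ! 1)))
    [subst \<alpha> [\<lambda>xs. Some (fst (prod_decode (xs ! 0)))], subst \<omega> [\<lambda>xs. Some (fst (prod_decode (xs ! 0)))],
     \<lambda>xs. Some (snd (prod_decode (xs ! 0)))]"
  have fst_inL: "inL M 1 (\<lambda>xs. Some (fst (prod_decode (xs ! 0))))"
    by (intro inL_computable computable_fst_prod_decode computable_proj) simp_all
  have "inL M 3 (\<lambda>xs. Some (1 - ((xs ! 0 - xs ! 2) + (xs ! 2 - xs ! 0) + xs ! 1)))"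
    by (intro inL_computable computable_add computable_diff computable_proj computable_const) simp_all
  moreover have "inL M 1 (subst \<alpha> [\<lambda>xs. Some (fst (prod_decode (xs ! 0)))])"
    "inL M 1 (subst \<omega> [\<lambda>xs. Some (fst (prod_decode (xs ! 0)))])"
    using inL_subst fst_inL assms(2,3) by simp_all
  moreover have "inL M 1 (\<lambda>xs. Some (snd (prod_decode (xs ! 0))))"
    by (intro inL_computable computable_snd_prod_decode computable_proj) simp_all
  ultimately have "inL M 1 test"
    unfolding test_def using inL_subst by (simp add: numeral_3_eq_3)
  then have if_inL: "inL M 1 (\<lambda>xs. if fst (prod_decode (xs ! 0)) \<in> R then test xs else Some 0)"
    by (intro inL_if_mem[OF R] computable_fst_prod_decode computable_proj) simp_all
  have pointwise: "(if fst (prod_decode t) \<in> R then test [t] else Some 0) = indicator_fn ?T [t]" for t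
  proof -
    obtain m a where t: "t = prod_encode (m, a)"
      by (metis prod_decode_inverse surj_pair)
    have T_iff: "t \<in> ?T \<longleftrightarrow> m \<in> R \<and> \<alpha> [m] = Some a \<and> \<omega> [m] = Some 0"
      unfolding t by (auto simp: prod_encode_eq)
    show ?thesis
    proof (cases "m \<in> R")
      case True
      then obtain x w where xw: "\<alpha> [m] = Some x" "\<omega> [m] = Some w"
        using defined by auto
      then have "test [t] = Some (1 - ((x - a) + (a - x) + w))"
        by (simp add: test_def subst_def t)
      then show ?thesis
        using True T_iff xw by (simp add: t indicator_fn_def; arith)
    next
      case False
      then show ?thesis
        using T_iff by (simp add: t indicator_fn_def)
    qed
  qed
  show ?thesis
    by (rule inL_unary_cong[OF if_inL]) (simp add: pointwise)
qed

end

theorem lemma2: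
  fixes M :: "nat set"
  assumes contains_prf: "\<forall>r k. k \<ge> 1 \<longrightarrow> inL M k (pr_fun r)"
    and closed_subst: "\<forall>m k f gs. length gs = m \<longrightarrow> inL M m f \<longrightarrow> (\<forall>g\<in>set gs. inL M k g)
                          \<longrightarrow> inL M k (subst f gs)"
    and closed_prec: "\<forall>k f g. inL M k f \<longrightarrow> inL M (k + 2) g \<longrightarrow> inL M (k + 1) (prec f g)"
    and closed_mu: "\<forall>k f. k \<ge> 1 \<longrightarrow> inL M (k + 1) f \<longrightarrow> inL M k (mu f)"
    and repr: "\<forall>f. inL M 1 f \<longrightarrow> (\<exists>R \<alpha> \<omega>. inL M 1 \<alpha> \<and> inL M 1 \<omega>
                  \<and> (\<forall>m\<in>R. \<alpha> [m] \<noteq> None \<and> \<omega> [m] \<noteq> None)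
                  \<and> inL M 1 (indicator_fn R)
                  \<and> (\<forall>x y. f [x] = Some y \<longleftrightarrow> (\<exists>m\<in>R. \<alpha> [m] = Some x \<and> \<omega> [m] = Some y)))"
    and universal: "\<exists>F. inL M 2 F \<and> (\<forall>f. inL M 1 f \<longrightarrow> (\<exists>n. \<forall>x. F [n, x] = f [x]))"
  shows "\<exists>S. e_reducible M (join S (- S)) \<and> e_reducible (join S (- S)) M"
proof -
  interpret recursively_closed M
    using contains_prf closed_subst closed_prec by unfold_locales
  obtain R \<alpha> \<omega> where "inL M 1 \<alpha>" "inL M 1 \<omega>" "\<forall>m\<in>R. \<alpha> [m] \<noteq> None \<and> \<omega> [m] \<noteq> None"
    "inL M 1 (indicator_fn R)" and semichar_M: "\<forall>x y. (if hd [x] \<in> M then Some 0 else None) = Some y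
      \<longleftrightarrow> (\<exists>m\<in>R. \<alpha> [m] = Some x \<and> \<omega> [m] = Some y)"
    using repr[rule_format, OF inL_semicharacteristic] by blast
  define T where "T = {prod_encode (m, a) | m a. m \<in> R \<and> \<alpha> [m] = Some a \<and> \<omega> [m] = Some 0}"
  have M_eq: "M = snd ` prod_decode ` T"
  proof (intro set_eqI)
    fix a
    have "a \<in> M \<longleftrightarrow> (\<exists>m. prod_encode (m, a) \<in> T)"
      using semichar_M[rule_format, of a 0] by (auto simp: T_def prod_encode_eq split: if_splits)
    also have "\<dots> \<longleftrightarrow> a \<in> snd ` prod_decode ` T"
      unfolding T_def by force
    finally show "a \<in> M \<longleftrightarrow> a \<in> snd ` prod_decode ` T" .
  qed
  have "inL M 1 (indicator_fn T)"
    unfolding T_def by (rule inL_indicator_witness_pairs) fact+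
  then have "e_reducible (join T (- T)) M"
    by (rule e_reducible_join_compl)
  moreover have "e_reducible M (join T (- T))"
    using e_reducible_snd_join_compl[of T] by (simp add: M_eq)
  ultimately show ?thesis by blast
qed

end
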